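(* Let $X$ be an $n$-dimensional projective space over an arbitrary field, and let $K$ be a $k$-dimensional subspace of $X$, where $-1\le k\le\min\{\frac{n-1}{2},n-3\}$. Let $\mathcal B_K$ be a $(2,1)$-blocking set in $K$ and let $\mathcal B_{X/K}$ be a $(2,1)$-blocking set in $X/K$. Then there exist, for every point $P$ of $K$, a hyperplane $H_P$ of $X$ with $K\subseteq H_P$, such that, letting $\mathcal B_{X/P}$ be the set of lines of $X$ through $P$ contained in $H_P$ (a $(1,0)$-blocking set in $X/P$), the disjoint union $$\mathcal B:=\{T\in\mathrm{Gr}_1(X):\langle K,T\rangle\in\mathcal B_{X/K}\}\ \cup\ \bigcup_{P\in\mathrm{Gr}_0(K)}\bigl(\mathcal B_{X/P}\setminus\{\text{lines of }K\text{ through }P\}\bigr)\ \cup\ \mathcal B_K$$ is a $(2,1)$-blocking set in $X$.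
   Context: Projective dimension is used; $\mathrm{Gr}_d(Y)$ is the set of $d$-dimensional subspaces of a projective space $Y$ (points: $d=0$, lines: $d=1$). For a $k$-dimensional subspace $K$ of $X$, the quotient space $X/K$ is the projective space of dimension $\dim X-k-1$ whose $r$-dimensional subspaces are the $(r+k+1)$-dimensional subspaces of $X$ containing $K$; $\langle K,T\rangle$ (the span) is regarded as an element of $X/K$. In particular, for a point $P$, points of $X/P$ are lines of $X$ through $P$ and lines of $X/P$ are planes of $X$ through $P$. For $-1\le t\le s$, an $(s,t)$-blocking set in a projective space $Y$ is a set of $t$-dimensional subspaces of $Y$ such that every $s$-dimensional subspace of $Y$ contains at least one of them. Thus a $(2,1)$-blocking set is a set of lines meeting the condition that every plane contains one of them. *)

theory Defs
  imports "HOL-Analysis.Analysis"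
begin

text \<open>The projective space X of (projective) dimension n over a field 'f is modelled by the
vector space 'f^'m with CARD('m) = n + 1. A projective subspace of projective dimension d
is a linear subspace of vector dimension d + 1 (the empty projective subspace, d = -1,
is the zero subspace).\<close>

definition pdim :: "('f::field ^ 'm) set \<Rightarrow> int" where
  "pdim S = int (vec.dim S) - 1"

definition pspace_dim :: "('f::field ^ 'm) itself \<Rightarrow> int" where
  "pspace_dim _ = int CARD('m) - 1"

text \<open>Subspaces of the interval projective space [B, A]: the projective space A/B, whose
r-dimensional subspaces are the subspaces S of X with B \<subseteq> S \<subseteq> A and pdim S = r + pdim B + 1.
For B = {0} this is just the projective space A itself; for A = UNIV it is X/B.\<close>
definition qsubs :: "('f::field ^ 'm) set \<Rightarrow> ('f ^ 'm) set \<Rightarrow> int \<Rightarrow> ('f ^ 'm) set set" where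
  "qsubs B A r = {S. vec.subspace S \<and> B \<subseteq> S \<and> S \<subseteq> A \<and> pdim S = r + pdim B + 1}"

definition blocking_set :: "('f::field ^ 'm) set \<Rightarrow> ('f ^ 'm) set \<Rightarrow> int \<Rightarrow> int
    \<Rightarrow> ('f ^ 'm) set set \<Rightarrow> bool" where
  "blocking_set B A s t \<B> \<longleftrightarrow> \<B> \<subseteq> qsubs B A t \<and>
      (\<forall>S \<in> qsubs B A s. \<exists>T \<in> \<B>. T \<subseteq> S)"

end

(* For a point P = <p> of K let H_P be the kernel of beta(p, -), where beta is a bilinear form on
   the underlying vector space for which K is totally isotropic and no nonzero vector of K is
   orthogonal to everything; such a form exists as soon as 2 dim K <= dim X.
   A plane E either misses K, and then <K, E> is a plane of X/K containing a line S of B_{X/K},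
   so that T = S inter E is a line with <K, T> = S; or E lies in K and B_K applies; or E meets K
   without lying in it, and bilinearity yields r in E inter K and v in E - K with beta(r, v) = 0,
   so that <r, v> is a line through <r> inside H_<r> and not inside K. The disjointness claims
   are elementary: lines of the first family meet K trivially, and a line through two points
   of K lies in K. *)

theory Submission
  imports Defs
begin

lemma qsubs_iff:
  "S \<in> qsubs B A r \<longleftrightarrow>
     vec.subspace S \<and> B \<subseteq> S \<and> S \<subseteq> A \<and> int (vec.dim S) = r + int (vec.dim B) + 1"
  unfolding qsubs_def pdim_def by auto

lemma qsubs_zero_iff:
  fixes S :: "('f::field ^ 'm) set"
  shows "S \<in> qsubs {0} A r \<longleftrightarrow> vec.subspace S \<and> S \<subseteq> A \<and> int (vec.dim S) = r + 1"
  unfolding qsubs_iff using vec.subspace_0 by auto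

lemma dim_span_Un_add_dim_Int:
  fixes S T :: "('f::field ^ 'm) set"
  assumes "vec.subspace S" "vec.subspace T"
  shows "vec.dim (vec.span (S \<union> T)) + vec.dim (S \<inter> T) = vec.dim S + vec.dim T"
proof -
  have "vec.span (S \<union> T) = {x + y |x y. x \<in> S \<and> y \<in> T}"
    unfolding vec.span_Un vec.span_eq_iff[THEN iffD2, OF assms(1)]
      vec.span_eq_iff[THEN iffD2, OF assms(2)] ..
  with vec.dim_sums_Int[OF assms] show ?thesis by simp
qed

lemma dim_eq_1_imp_span_singleton:
  fixes P :: "('f::field ^ 'm) set"
  assumes "vec.subspace P" "vec.dim P = 1"
  obtains p where "p \<noteq> 0" "P = vec.span {p}"
proof -
  obtain B where B: "B \<subseteq> P" "vec.independent B" "P \<subseteq> vec.span B" "card B = vec.dim P"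
    using vec.basis_exists by blast
  then obtain p where p: "B = {p}"
    using assms(2) card_1_singletonE by metis
  have "vec.span B = P"
    using B assms(1) by (metis vec.span_minimal subset_antisym)
  moreover have "p \<noteq> 0"
    using B(2) p vec.dependent_zero by blast
  ultimately show ?thesis
    using that p by blast
qed

lemma dim_le_dim_Int_kernel_Suc:
  fixes f :: "'f::field ^ 'm \<Rightarrow> 'f"
  assumes f: "Vector_Spaces.linear (*s) (*) f" and S: "vec.subspace S"
  shows "vec.dim S \<le> vec.dim (S \<inter> {x. f x = 0}) + 1"
proof (cases "S \<subseteq> {x. f x = 0}")
  case True
  then show ?thesis by (simp add: Int_absorb2)
next
  case False
  interpret f: Vector_Spaces.linear "(*s)" "(*)" f by (rule f)
  obtain u where u: "u \<in> S" "f u \<noteq> 0" using False by blast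
  let ?W = "vec.span (insert u (S \<inter> {x. f x = 0}))"
  have "S \<subseteq> ?W"
  proof
    fix x assume "x \<in> S"
    define c where "c = f x / f u"
    have "f (x - c *s u) = 0"
      using u(2) by (simp add: c_def f.diff f.scale)
    moreover have "x - c *s u \<in> S"
      using S \<open>x \<in> S\<close> u(1) by (intro vec.subspace_diff vec.subspace_scale)
    ultimately have "x - c *s u \<in> ?W"
      by (intro vec.span_base insertI2) simp
    moreover have "c *s u \<in> ?W"
      by (intro vec.span_scale vec.span_base insertI1)
    ultimately have "x - c *s u + c *s u \<in> ?W"
      by (rule vec.span_add)
    then show "x \<in> ?W" by simp
  qed
  then have "vec.dim S \<le> vec.dim (insert u (S \<inter> {x. f x = 0}))"
    by (metis vec.dim_subset vec.dim_span)
  also have "\<dots> \<le> vec.dim (S \<inter> {x. f x = 0}) + 1"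
    by (simp add: vec.dim_insert)
  finally show ?thesis .
qed

lemma dim_kernel_functional:
  fixes f :: "'f::field ^ 'm \<Rightarrow> 'f"
  assumes f: "Vector_Spaces.linear (*s) (*) f" and u: "f u \<noteq> 0"
  shows "vec.dim {x. f x = 0} = CARD('m) - 1"
proof -
  interpret f: Vector_Spaces.linear "(*s)" "(*)" f by (rule f)
  let ?N = "{x. f x = 0}"
  have N: "vec.subspace ?N"
    by (rule f.subspace_kernel)
  have "vec.span ?N \<subset> vec.span UNIV"
    unfolding vec.span_eq_iff[THEN iffD2, OF N] vec.span_UNIV using u by auto
  then have "vec.dim ?N < vec.dim (UNIV :: ('f ^ 'm) set)"
    by (rule vec.dim_psubset)
  then have "vec.dim ?N < CARD('m)"
    by (simp add: card_cart_basis)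
  moreover have "CARD('m) \<le> vec.dim ?N + 1"
    using dim_le_dim_Int_kernel_Suc[OF f vec.subspace_UNIV] by (simp add: card_cart_basis)
  ultimately show ?thesis by linarith
qed

locale isotropic_pairing =
  fixes K :: "('f::field ^ 'm) set" and \<beta> :: "'f ^ 'm \<Rightarrow> 'f ^ 'm \<Rightarrow> 'f"
  assumes subspace_K: "vec.subspace K"
    and linear_right: "\<And>p. Vector_Spaces.linear (*s) (*) (\<beta> p)"
    and linear_left: "\<And>x. Vector_Spaces.linear (*s) (*) (\<lambda>p. \<beta> p x)"
    and isotropic: "\<And>p x. p \<in> K \<Longrightarrow> x \<in> K \<Longrightarrow> \<beta> p x = 0"
    and nondegenerate: "\<And>p. p \<in> K \<Longrightarrow> p \<noteq> 0 \<Longrightarrow> \<exists>x. \<beta> p x \<noteq> 0"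

lemma isotropic_pairing_exists:
  fixes K :: "('f::field ^ 'm) set"
  assumes K: "vec.subspace K" and dim: "2 * vec.dim K \<le> CARD('m)"
  obtains \<beta> where "isotropic_pairing K \<beta>"
proof -
  obtain B0 where B0: "B0 \<subseteq> K" "vec.independent B0" "K \<subseteq> vec.span B0" "card B0 = vec.dim K"
    by (rule vec.basis_exists)
  obtain B where B: "B0 \<subseteq> B" "vec.independent B" "UNIV \<subseteq> vec.span B"
    by (rule vec.maximal_independent_subset_extend[of B0 UNIV, OF _ B0(2)]) auto
  have "finite B"
    using B(2) by (rule vec.finiteI_independent)
  moreover have "card B = CARD('m)"
    using vec.basis_card_eq_dim[of B UNIV] B by (simp add: card_cart_basis)
  ultimately have "card B0 \<le> card (B - B0)"
    using card_Diff_subset[OF finite_subset[OF B(1)] B(1)] B0(4) dim by simp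
  then obtain \<sigma> where \<sigma>: "\<sigma> ` B0 \<subseteq> B - B0" "inj_on \<sigma> B0"
    using card_le_inj[OF finite_subset[OF B(1) \<open>finite B\<close>] finite_Diff[OF \<open>finite B\<close>]] by blast
  define R where "R = vec.representation B"
  \<comment> \<open>Vectors of K have no \<open>\<sigma> b\<close>-coordinates, so K is isotropic, while \<open>\<beta> p (\<sigma> b)\<close>
    recovers the b-coordinate of p, so no nonzero p in K is orthogonal to everything.\<close>
  define \<beta> where "\<beta> p x = (\<Sum>b\<in>B0. R p b * R x (\<sigma> b))" for p x
  have inB: "v \<in> vec.span B" for v
    using B(3) by blast
  have R_add: "R (u + v) b = R u b + R v b" and R_scale: "R (c *s v) b = c * R v b" for u v c b
    unfolding R_def by (simp_all add: vec.representation_add[OF B(2) inB inB]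
        vec.representation_scale[OF B(2) inB])
  have R_K: "R x b = 0" if "x \<in> K" "b \<notin> B0" for x b
  proof -
    have "R x = vec.representation B0 x"
      unfolding R_def using that(1) B0(3) by (intro vec.representation_extend[OF B(2) _ B(1)]) blast
    then show ?thesis
      using that(2) vec.representation_ne_zero by metis
  qed
  have "isotropic_pairing K \<beta>"
  proof
    show "vec.subspace K" by (fact K)
    show "\<beta> p (x + y) = \<beta> p x + \<beta> p y" "\<beta> (x + y) q = \<beta> x q + \<beta> y q" for p q x y
      by (simp_all add: \<beta>_def R_add distrib_left distrib_right sum.distrib)
    show "\<beta> p (c *s x) = c * \<beta> p x" "\<beta> (c *s x) q = c * \<beta> x q" for p q c x
      by (simp_all add: \<beta>_def R_scale sum_distrib_left ac_simps)
    show "\<beta> p x = 0" if "p \<in> K" "x \<in> K" for p x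
      unfolding \<beta>_def using \<sigma>(1) R_K[OF \<open>x \<in> K\<close>] by (auto intro!: sum.neutral)
    show "\<exists>x. \<beta> p x \<noteq> 0" if "p \<in> K" "p \<noteq> 0" for p
    proof -
      have "\<exists>b0\<in>B0. R p b0 \<noteq> 0"
      proof (rule ccontr)
        assume "\<not> (\<exists>b0\<in>B0. R p b0 \<noteq> 0)"
        then have "R p b = 0" for b
          using R_K[OF \<open>p \<in> K\<close>] by blast
        then have "(\<Sum>b | R p b \<noteq> 0. R p b *s b) = 0"
          by simp
        moreover have "(\<Sum>b | R p b \<noteq> 0. R p b *s b) = p"
          unfolding R_def by (rule vec.sum_nonzero_representation_eq[OF B(2) inB])
        ultimately show False
          using \<open>p \<noteq> 0\<close> by simp
      qed
      then obtain b0 where b0: "b0 \<in> B0" "R p b0 \<noteq> 0" ..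
      have "R (\<sigma> b0) = (\<lambda>v. if v = \<sigma> b0 then 1 else 0)"
        unfolding R_def using \<sigma>(1) b0(1) by (intro vec.representation_basis[OF B(2)]) blast
      then have "\<beta> p (\<sigma> b0) = (\<Sum>b\<in>B0. if b = b0 then R p b else 0)"
        unfolding \<beta>_def using \<sigma>(2) b0(1) by (intro sum.cong) (auto dest: inj_onD)
      also have "\<dots> = R p b0"
        using b0(1) finite_subset[OF B(1) \<open>finite B\<close>] by simp
      finally show ?thesis
        using b0(2) by metis
    qed
  qed
  then show ?thesis by (rule that)
qed

context isotropic_pairing
begin

definition polar :: "('f ^ 'm) set \<Rightarrow> ('f ^ 'm) set" where
  "polar P = {x. \<forall>y\<in>P. \<beta> y x = 0}"

lemma subspace_polar: "vec.subspace (polar P)"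
proof -
  have add: "\<beta> y (x + z) = \<beta> y x + \<beta> y z" and scale: "\<beta> y (c *s x) = c * \<beta> y x"
    for y x z c
    using linear_right[of y] by (simp_all add: Vector_Spaces.linear_iff)
  have "\<beta> y 0 = 0" for y
    using scale[of y 0 0] by simp
  then show ?thesis
    unfolding polar_def vec.subspace_def by (simp add: add scale)
qed

lemma polar_span_singleton: "polar (vec.span {p}) = {x. \<beta> p x = 0}"
proof -
  have "\<beta> (c *s p) x = c * \<beta> p x" for c x
    using linear_left[of x] by (simp add: Vector_Spaces.linear_iff)
  then show ?thesis
    unfolding polar_def vec.span_singleton by (auto intro: exI[of _ 1])
qed

lemma polar_point_hyperplane:
  assumes P: "P \<in> qsubs {0} K 0"
  shows "polar P \<in> qsubs {0} UNIV (pspace_dim TYPE('f ^ 'm) - 1)" and "K \<subseteq> polar P"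
proof -
  have "vec.subspace P" "vec.dim P = 1" "P \<subseteq> K"
    using P by (simp_all add: qsubs_zero_iff)
  then obtain p where p: "p \<noteq> 0" "P = vec.span {p}"
    using dim_eq_1_imp_span_singleton by metis
  with \<open>P \<subseteq> K\<close> have "p \<in> K"
    using vec.span_base by blast
  then obtain u where "\<beta> p u \<noteq> 0"
    using nondegenerate p(1) by blast
  then have "vec.dim (polar P) = CARD('m) - 1"
    unfolding p(2) polar_span_singleton by (rule dim_kernel_functional[OF linear_right])
  then show "polar P \<in> qsubs {0} UNIV (pspace_dim TYPE('f ^ 'm) - 1)"
    using subspace_polar by (simp add: qsubs_zero_iff pspace_dim_def)
  show "K \<subseteq> polar P"
    unfolding p(2) polar_span_singleton using isotropic \<open>p \<in> K\<close> by blast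
qed

lemma subspace_obtains_isotropic_pair:
  assumes E: "vec.subspace E" "3 \<le> vec.dim E"
    and meets: "\<not> E \<inter> K \<subseteq> {0}" and not_in: "\<not> E \<subseteq> K"
  obtains r v where "r \<in> E \<inter> K" "r \<noteq> 0" "v \<in> E" "v \<notin> K" "\<beta> r v = 0"
proof -
  let ?I = "E \<inter> K"
  have I: "vec.subspace ?I"
    using E(1) subspace_K by (rule vec.subspace_inter)
  have "vec.dim ?I \<noteq> 0"
    using meets by simp
  then consider "vec.dim ?I = 1" | "2 \<le> vec.dim ?I"
    by linarith
  then show ?thesis
  proof cases
    case 1
    with I obtain p where p: "p \<noteq> 0" "?I = vec.span {p}"
      by (rule dim_eq_1_imp_span_singleton)
    then have "p \<in> ?I"
      using vec.span_base by blast
    let ?G = "E \<inter> {x. \<beta> p x = 0}"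
    have "3 \<le> vec.dim ?G + 1"
      using dim_le_dim_Int_kernel_Suc[OF linear_right[of p] E(1)] E(2) by linarith
    then have "\<not> ?G \<subseteq> ?I"
      using vec.dim_subset[of ?G ?I] 1 by linarith
    then obtain v where "v \<in> E" "v \<notin> K" "\<beta> p v = 0"
      by blast
    with \<open>p \<in> ?I\<close> p(1) show ?thesis
      by (rule that)
  next
    case 2
    from not_in obtain v where v: "v \<in> E" "v \<notin> K"
      by blast
    have "2 \<le> vec.dim (?I \<inter> {r. \<beta> r v = 0}) + 1"
      using dim_le_dim_Int_kernel_Suc[OF linear_left[of v] I] 2 by linarith
    then have "vec.dim (?I \<inter> {r. \<beta> r v = 0}) \<noteq> 0"
      by linarith
    then have "\<not> ?I \<inter> {r. \<beta> r v = 0} \<subseteq> {0}"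
      by simp
    then obtain r where "r \<in> ?I" "r \<noteq> 0" "\<beta> r v = 0"
      by blast
    with v show ?thesis
      by (intro that) auto
  qed
qed

end

text \<open>In the paper's notation, \<open>lifted_lines K BXK\<close> is the first family of the union and
  \<open>lines_through_not_in K H P\<close> is the set \<open>B_{X/P}\<close> minus the lines of K through P.\<close>

definition lifted_lines :: "('f::field ^ 'm) set \<Rightarrow> ('f ^ 'm) set set \<Rightarrow> ('f ^ 'm) set set" where
  "lifted_lines K BXK = {T \<in> qsubs {0} UNIV 1. vec.span (K \<union> T) \<in> BXK}"

definition lines_through_not_in :: "('f::field ^ 'm) set \<Rightarrow> (('f ^ 'm) set \<Rightarrow> ('f ^ 'm) set)
    \<Rightarrow> ('f ^ 'm) set \<Rightarrow> ('f ^ 'm) set set" where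
  "lines_through_not_in K H P =
     {L \<in> qsubs {0} UNIV 1. P \<subseteq> L \<and> L \<subseteq> H P} - {L \<in> qsubs {0} K 1. P \<subseteq> L}"

lemma lifted_line_in_skew_plane:
  fixes K E :: "('f::field ^ 'm) set"
  assumes K: "vec.subspace K" and BXK: "blocking_set K UNIV 2 1 BXK"
    and E: "E \<in> qsubs {0} UNIV 2" and skew: "E \<inter> K \<subseteq> {0}"
  obtains T where "T \<in> lifted_lines K BXK" "T \<subseteq> E"
proof -
  have E_sub: "vec.subspace E" and dim_E: "vec.dim E = 3"
    using E by (simp_all add: qsubs_zero_iff)
  let ?J = "vec.span (K \<union> E)"
  have "vec.dim (K \<inter> E) = 0"
    using skew by (simp add: Int_commute)
  then have "vec.dim ?J = vec.dim K + 3"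
    using dim_span_Un_add_dim_Int[OF K E_sub] dim_E by linarith
  moreover have "K \<subseteq> ?J" and "E \<subseteq> ?J"
    using vec.span_superset by blast+
  ultimately have "?J \<in> qsubs K UNIV 2"
    by (simp add: qsubs_iff vec.subspace_span)
  then obtain S where S: "S \<in> BXK" "S \<subseteq> ?J"
    using BXK unfolding blocking_set_def by blast
  then have "S \<in> qsubs K UNIV 1"
    using BXK unfolding blocking_set_def by blast
  then have S_sub: "vec.subspace S" and "K \<subseteq> S" and dim_S: "vec.dim S = vec.dim K + 2"
    by (simp_all add: qsubs_iff)
  let ?T = "S \<inter> E"
  have T_sub: "vec.subspace ?T"
    using S_sub E_sub by (rule vec.subspace_inter)
  have "vec.span (S \<union> E) \<subseteq> ?J"
    using S(2) \<open>E \<subseteq> ?J\<close> by (simp add: vec.span_minimal vec.subspace_span)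
  then have "vec.dim (vec.span (S \<union> E)) \<le> vec.dim K + 3"
    using vec.dim_subset \<open>vec.dim ?J = vec.dim K + 3\<close> by metis
  then have "2 \<le> vec.dim ?T"
    using dim_span_Un_add_dim_Int[OF S_sub E_sub] dim_S dim_E by simp
  have "vec.dim (K \<inter> ?T) = 0"
    using skew by auto
  then have dim_KT: "vec.dim (vec.span (K \<union> ?T)) = vec.dim K + vec.dim ?T"
    using dim_span_Un_add_dim_Int[OF K T_sub] by linarith
  have KT_S: "vec.span (K \<union> ?T) \<subseteq> S"
    using \<open>K \<subseteq> S\<close> S_sub by (simp add: vec.span_minimal)
  then have "vec.dim ?T \<le> 2"
    using vec.dim_subset[OF KT_S] dim_KT dim_S by simp
  with \<open>2 \<le> vec.dim ?T\<close> have "vec.dim ?T = 2"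
    by simp
  then have "vec.span (K \<union> ?T) = S"
    using vec.subspace_dim_equal[OF vec.subspace_span S_sub KT_S] dim_KT dim_S by simp
  with \<open>vec.dim ?T = 2\<close> have "?T \<in> lifted_lines K BXK"
    unfolding lifted_lines_def using T_sub S(1) by (simp add: qsubs_zero_iff)
  then show ?thesis
    using that by blast
qed

lemma lifted_line_Int_subset_zero:
  fixes K T :: "('f::field ^ 'm) set"
  assumes K: "vec.subspace K" and BXK: "BXK \<subseteq> qsubs K UNIV 1"
    and T: "T \<in> lifted_lines K BXK"
  shows "K \<inter> T \<subseteq> {0}"
proof -
  have T_sub: "vec.subspace T" and dim_T: "vec.dim T = 2"
    using T unfolding lifted_lines_def by (simp_all add: qsubs_zero_iff)
  have "vec.dim (vec.span (K \<union> T)) = vec.dim K + 2"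
    using T BXK unfolding lifted_lines_def by (auto simp: qsubs_iff)
  then have "vec.dim (K \<inter> T) = 0"
    using dim_span_Un_add_dim_Int[OF K T_sub] dim_T by linarith
  then show ?thesis
    by simp
qed

lemma lifted_lines_Int_lines_of_K:
  fixes K :: "('f::field ^ 'm) set"
  assumes K: "vec.subspace K" and BXK: "BXK \<subseteq> qsubs K UNIV 1"
  shows "lifted_lines K BXK \<inter> qsubs {0} K 1 = {}"
proof -
  have "\<not> T \<subseteq> K" if "T \<in> lifted_lines K BXK" for T
  proof
    assume "T \<subseteq> K"
    with lifted_line_Int_subset_zero[OF K BXK that] have "vec.dim T = 0"
      by (simp add: Int_absorb1)
    with that show False
      unfolding lifted_lines_def by (simp add: qsubs_zero_iff)
  qed
  then show ?thesis
    by (auto simp: qsubs_zero_iff)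
qed

lemma lifted_lines_Int_lines_through_not_in:
  fixes K P :: "('f::field ^ 'm) set"
  assumes K: "vec.subspace K" and BXK: "BXK \<subseteq> qsubs K UNIV 1" and P: "P \<in> qsubs {0} K 0"
  shows "lifted_lines K BXK \<inter> lines_through_not_in K H P = {}"
proof -
  have "\<not> P \<subseteq> T" if "T \<in> lifted_lines K BXK" for T
  proof
    assume "P \<subseteq> T"
    moreover have "P \<subseteq> K" and "vec.dim P = 1"
      using P by (simp_all add: qsubs_zero_iff)
    ultimately have "P \<subseteq> {0}"
      using lifted_line_Int_subset_zero[OF K BXK that] by blast
    then have "vec.dim P = 0"
      by simp
    with \<open>vec.dim P = 1\<close> show False
      by simp
  qed
  then show ?thesis
    unfolding lines_through_not_in_def by blast
qed

lemma line_eq_span_Un_points: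
  fixes L P Q :: "('f::field ^ 'm) set"
  assumes L: "L \<in> qsubs {0} UNIV 1" and P: "P \<in> qsubs {0} UNIV 0" and Q: "Q \<in> qsubs {0} UNIV 0"
    and "P \<noteq> Q" "P \<subseteq> L" "Q \<subseteq> L"
  shows "L = vec.span (P \<union> Q)"
proof -
  have L_sub: "vec.subspace L" "vec.dim L = 2"
    and P_sub: "vec.subspace P" "vec.dim P = 1"
    and Q_sub: "vec.subspace Q" "vec.dim Q = 1"
    using L P Q by (simp_all add: qsubs_zero_iff)
  have "vec.dim (P \<inter> Q) \<noteq> 1"
  proof
    assume "vec.dim (P \<inter> Q) = 1"
    then have "P \<inter> Q = P" and "P \<inter> Q = Q"
      using P_sub Q_sub vec.subspace_inter
      by (metis Int_lower1 Int_lower2 order_refl vec.subspace_dim_equal)+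
    with \<open>P \<noteq> Q\<close> show False
      by simp
  qed
  moreover have "vec.dim (P \<inter> Q) \<le> 1"
    using vec.dim_subset[of "P \<inter> Q" P] P_sub by simp
  ultimately have "vec.dim (vec.span (P \<union> Q)) = 2"
    using dim_span_Un_add_dim_Int[OF P_sub(1) Q_sub(1)] P_sub Q_sub by linarith
  moreover have "vec.span (P \<union> Q) \<subseteq> L"
    using assms(5,6) L_sub by (simp add: vec.span_minimal)
  ultimately have "vec.span (P \<union> Q) = L"
    using vec.subspace_dim_equal[OF vec.subspace_span L_sub(1), of "P \<union> Q"] L_sub(2) by simp
  then show ?thesis
    by (rule sym)
qed

lemma lines_through_not_in_disjoint:
  fixes K P Q :: "('f::field ^ 'm) set"
  assumes K: "vec.subspace K" and P: "P \<in> qsubs {0} K 0" and Q: "Q \<in> qsubs {0} K 0"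
    and "P \<noteq> Q"
  shows "lines_through_not_in K H P \<inter> lines_through_not_in K H Q = {}"
proof -
  have "L \<subseteq> K" if L: "L \<in> qsubs {0} UNIV 1" "P \<subseteq> L" "Q \<subseteq> L" for L
  proof -
    have "L = vec.span (P \<union> Q)"
      using line_eq_span_Un_points[OF L(1) _ _ \<open>P \<noteq> Q\<close> L(2,3)] P Q
      by (simp add: qsubs_zero_iff)
    also have "\<dots> \<subseteq> K"
      using P Q K by (simp add: qsubs_zero_iff vec.span_minimal)
    finally show ?thesis .
  qed
  then show ?thesis
    unfolding lines_through_not_in_def by (auto simp: qsubs_zero_iff)
qed

context isotropic_pairing
begin

lemma isotropic_line:
  assumes r: "r \<in> K" "r \<noteq> 0" and v: "v \<notin> K" "\<beta> r v = 0"
  shows "vec.span {v, r} \<in> lines_through_not_in K polar (vec.span {r})"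
proof -
  have "vec.span {r} \<subseteq> K"
    using r(1) subspace_K by (simp add: vec.span_minimal)
  then have "v \<notin> vec.span {r}"
    using v(1) by blast
  then have "vec.span {v, r} \<in> qsubs {0} UNIV 1"
    using r(2) by (simp add: qsubs_zero_iff vec.dim_insert vec.subspace_span)
  moreover have "vec.span {r} \<subseteq> vec.span {v, r}"
    by (rule vec.span_mono) blast
  moreover have "vec.span {v, r} \<subseteq> polar (vec.span {r})"
    using v(2) isotropic[OF r(1) r(1)] subspace_polar[of "vec.span {r}"]
    by (intro vec.span_minimal) (simp_all add: polar_span_singleton)
  moreover have "\<not> vec.span {v, r} \<subseteq> K"
    using v(1) vec.span_base[of v "{v, r}"] by blast
  ultimately show ?thesis
    unfolding lines_through_not_in_def by (simp add: qsubs_zero_iff)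
qed

lemma blocking_set_construction:
  assumes BK: "blocking_set {0} K 2 1 BK" and BXK: "blocking_set K UNIV 2 1 BXK"
  shows "blocking_set {0} UNIV 2 1
    (lifted_lines K BXK \<union> (\<Union>P \<in> qsubs {0} K 0. lines_through_not_in K polar P) \<union> BK)"
  unfolding blocking_set_def
proof (intro conjI ballI)
  show "lifted_lines K BXK \<union> (\<Union>P \<in> qsubs {0} K 0. lines_through_not_in K polar P) \<union> BK
      \<subseteq> qsubs {0} UNIV 1"
    using BK unfolding blocking_set_def lifted_lines_def lines_through_not_in_def
    by (auto simp: qsubs_zero_iff)
  fix E :: "('f ^ 'm) set"
  assume E: "E \<in> qsubs {0} UNIV 2"
  then have E_sub: "vec.subspace E" and dim_E: "vec.dim E = 3"
    by (simp_all add: qsubs_zero_iff)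
  consider "E \<inter> K \<subseteq> {0}" | "E \<subseteq> K" | "\<not> E \<inter> K \<subseteq> {0}" "\<not> E \<subseteq> K"
    by blast
  then show "\<exists>T \<in> lifted_lines K BXK \<union> (\<Union>P \<in> qsubs {0} K 0. lines_through_not_in K polar P) \<union> BK.
      T \<subseteq> E"
  proof cases
    case 1
    with subspace_K BXK E obtain T where "T \<in> lifted_lines K BXK" "T \<subseteq> E"
      by (rule lifted_line_in_skew_plane)
    then show ?thesis
      by blast
  next
    case 2
    with E have "E \<in> qsubs {0} K 2"
      by (simp add: qsubs_zero_iff)
    with BK obtain T where "T \<in> BK" "T \<subseteq> E"
      unfolding blocking_set_def by blast
    then show ?thesis
      by blast
  next
    case 3
    with E_sub dim_E obtain r v where r: "r \<in> E \<inter> K" "r \<noteq> 0" and v: "v \<in> E" "v \<notin> K" "\<beta> r v = 0"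
      by (elim subspace_obtains_isotropic_pair) auto
    then have "vec.span {v, r} \<in> lines_through_not_in K polar (vec.span {r})"
      by (intro isotropic_line) auto
    moreover have "vec.span {r} \<in> qsubs {0} K 0"
      using r subspace_K by (simp add: qsubs_zero_iff vec.dim_insert vec.span_minimal vec.subspace_span)
    moreover have "vec.span {v, r} \<subseteq> E"
      using r(1) v(1) E_sub by (simp add: vec.span_minimal)
    ultimately show ?thesis
      by blast
  qed
qed

end

theorem theorem3p29:
  fixes K :: "('f::field ^ 'm) set" and k n :: int
    and BK BXK :: "('f ^ 'm) set set"
  assumes "n = pspace_dim TYPE('f ^ 'm)"
    and "K \<in> qsubs {0} UNIV k"
    and "-1 \<le> k" and "2 * k \<le> n - 1" and "k \<le> n - 3"
    and "blocking_set {0} K 2 1 BK"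
    and "blocking_set K UNIV 2 1 BXK"
  shows "\<exists>H :: ('f ^ 'm) set \<Rightarrow> ('f ^ 'm) set.
     (\<forall>P \<in> qsubs {0} K 0. H P \<in> qsubs {0} UNIV (n - 1) \<and> K \<subseteq> H P) \<and>
     (let BXP = (\<lambda>P. {L \<in> qsubs {0} UNIV 1. P \<subseteq> L \<and> L \<subseteq> H P});
          B1 = {T \<in> qsubs {0} UNIV 1. vec.span (K \<union> T) \<in> BXK};
          B2 = (\<lambda>P. BXP P - {L \<in> qsubs {0} K 1. P \<subseteq> L})
      in blocking_set {0} UNIV 2 1 (B1 \<union> (\<Union>P \<in> qsubs {0} K 0. B2 P) \<union> BK)
         \<and> B1 \<inter> (\<Union>P \<in> qsubs {0} K 0. B2 P) = {}
         \<and> B1 \<inter> BK = {}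
         \<and> (\<Union>P \<in> qsubs {0} K 0. B2 P) \<inter> BK = {}
         \<and> (\<forall>P \<in> qsubs {0} K 0. \<forall>Q \<in> qsubs {0} K 0. P \<noteq> Q \<longrightarrow> B2 P \<inter> B2 Q = {}))"
proof -
  have K: "vec.subspace K" and dim_K: "int (vec.dim K) = k + 1"
    using assms(2) by (simp_all add: qsubs_zero_iff)
  have "2 * vec.dim K \<le> CARD('m)"
    using assms(1,4) dim_K by (simp add: pspace_dim_def)
  with K obtain \<beta> where "isotropic_pairing K \<beta>"
    by (rule isotropic_pairing_exists)
  then interpret isotropic_pairing K \<beta> .
  have BK: "BK \<subseteq> qsubs {0} K 1" and BXK: "BXK \<subseteq> qsubs K UNIV 1"
    using assms(6,7) unfolding blocking_set_def by blast+
  show ?thesis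
    unfolding Let_def lifted_lines_def[symmetric] lines_through_not_in_def[symmetric] assms(1)
  proof (intro exI[of _ polar] conjI)
    show "\<forall>P \<in> qsubs {0} K 0. polar P \<in> qsubs {0} UNIV (pspace_dim TYPE('f ^ 'm) - 1) \<and> K \<subseteq> polar P"
      using polar_point_hyperplane by blast
    show "blocking_set {0} UNIV 2 1
        (lifted_lines K BXK \<union> (\<Union>P \<in> qsubs {0} K 0. lines_through_not_in K polar P) \<union> BK)"
      using assms(6,7) by (rule blocking_set_construction)
    show "lifted_lines K BXK \<inter> (\<Union>P \<in> qsubs {0} K 0. lines_through_not_in K polar P) = {}"
      using lifted_lines_Int_lines_through_not_in[OF K BXK] by blast
    show "lifted_lines K BXK \<inter> BK = {}"
      using lifted_lines_Int_lines_of_K[OF K BXK] BK by blast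
    show "(\<Union>P \<in> qsubs {0} K 0. lines_through_not_in K polar P) \<inter> BK = {}"
      using BK unfolding lines_through_not_in_def by blast
    show "\<forall>P \<in> qsubs {0} K 0. \<forall>Q \<in> qsubs {0} K 0. P \<noteq> Q \<longrightarrow>
        lines_through_not_in K polar P \<inter> lines_through_not_in K polar Q = {}"
      using lines_through_not_in_disjoint[OF K] by blast
  qed
qed

end
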